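(* Let $G=(V,E)$ be a finite, undirected, unweighted, connected graph, let $P=(v_{i_1},\dots,v_{i_k})$ be a shortest walk in $G$ visiting every vertex at least once, and let $\ell\ge1$. The CNOT cost of the circuit applying the quantum hashing algorithm $\ell$ times with the path strategy (described in the context) is at most $(3k-4)\ell+2$.
   Context: A walk is a sequence of vertices with consecutive entries adjacent (repetitions allowed); its length is the number of entries. Each vertex carries one physical qubit; two-qubit gates only act on qubits at adjacent vertices. $CR_y(\xi)=\mathrm{diag}(I,R_y(\xi))$; SWAP exchanges two qubits. Single application along a walk $(x_1,\dots,x_k)$: target starts on $x_2$; $U=\emptyset$; apply $CR_y$ (control $x_1$, target $x_2$), add $x_1$ to $U$, $j=2$; loop: if $x_{j+1}\notin U$ apply $CR_y$ (control $x_{j+1}$, target $x_j$) and add $x_{j+1}$ to $U$; if $j=k-1$ stop; else if $x_{j+2}=x_j$ set $j\leftarrow j+2$, otherwise apply SWAP to $x_j,x_{j+1}$ and set $j\leftarrow j+1$; repeat. Path strategy: the applications alternately use $P$ and its reversal $(v_{i_k},\dots,v_{i_1})$; the last $CR_y$ of one application and the first $CR_y$ of the next act on the same control/target pair and are merged into a single $CR_y$ gate. CNOT cost: number of CNOTs after decomposition, counting each $CR_y$ as 2, each SWAP as 3, a $CR_y$ immediately followed by a SWAP on the same two qubits as 3 in total, single-qubit gates as 0. *)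

theory Defs
  imports Main
begin

definition simple_graph :: "'a set \<Rightarrow> ('a \<Rightarrow> 'a \<Rightarrow> bool) \<Rightarrow> bool" where
  "simple_graph V E \<longleftrightarrow> finite V \<and> (\<forall>u v. E u v \<longrightarrow> u \<in> V \<and> v \<in> V)
     \<and> (\<forall>u v. E u v \<longrightarrow> E v u) \<and> (\<forall>v. \<not> E v v)"

definition connected_graph :: "'a set \<Rightarrow> ('a \<Rightarrow> 'a \<Rightarrow> bool) \<Rightarrow> bool" where
  "connected_graph V E \<longleftrightarrow> (\<forall>u\<in>V. \<forall>v\<in>V. E\<^sup>*\<^sup>* u v)"

definition is_walk :: "'a set \<Rightarrow> ('a \<Rightarrow> 'a \<Rightarrow> bool) \<Rightarrow> 'a list \<Rightarrow> bool" where
  "is_walk V E xs \<longleftrightarrow> xs \<noteq> [] \<and> set xs \<subseteq> V \<and>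
     (\<forall>i. i + 1 < length xs \<longrightarrow> E (xs ! i) (xs ! (i + 1)))"

definition shortest_covering_walk :: "'a set \<Rightarrow> ('a \<Rightarrow> 'a \<Rightarrow> bool) \<Rightarrow> 'a list \<Rightarrow> bool" where
  "shortest_covering_walk V E xs \<longleftrightarrow> is_walk V E xs \<and> set xs = V \<and>
     (\<forall>ys. is_walk V E ys \<and> set ys = V \<longrightarrow> length xs \<le> length ys)"

(* Gates acting on the qubits at given vertices. CRy c t: control c, target t
   (the rotation angle does not affect the CNOT cost and is omitted). *)
datatype 'a gate = CRy 'a 'a | SWAP 'a 'a

(* The loop of a single application; j is the 1-based index, x_i = xs ! (i - 1).
   The guard "length xs < j + 1" only makes the function total. *)
function app_loop :: "'a list \<Rightarrow> 'a set \<Rightarrow> nat \<Rightarrow> 'a gate list" where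
  "app_loop xs U j =
    (if length xs < j + 1 \<or> j < 1 then []
     else
       (if xs ! j \<notin> U then [CRy (xs ! j) (xs ! (j - 1))] else []) @
       (let U' = insert (xs ! j) U in
        if j = length xs - 1 then []
        else if xs ! (j + 1) = xs ! (j - 1) then app_loop xs U' (j + 2)
        else SWAP (xs ! (j - 1)) (xs ! j) # app_loop xs U' (j + 1)))"
  by pat_completeness auto
termination
  by (relation "measure (\<lambda>(xs, U, j). length xs - j)") auto

definition single_application :: "'a list \<Rightarrow> 'a gate list" where
  "single_application xs = CRy (xs ! 0) (xs ! 1) # app_loop xs {xs ! 0} 2"

(* Path strategy, l applications, alternately P and rev P; the first CRy of each
   subsequent application is merged into the last CRy of the previous one. *)
fun path_strategy_apps :: "'a list \<Rightarrow> nat \<Rightarrow> 'a gate list" where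
  "path_strategy_apps P 0 = []"
| "path_strategy_apps P (Suc 0) = single_application P"
| "path_strategy_apps P (Suc (Suc n)) =
     path_strategy_apps P (Suc n) @
     tl (single_application (if even (Suc n) then P else rev P))"

fun cnot_cost :: "'a gate list \<Rightarrow> nat" where
  "cnot_cost [] = 0"
| "cnot_cost (CRy a b # SWAP c d # gs) =
     (if {a, b} = {c, d} then 3 + cnot_cost gs else 2 + cnot_cost (SWAP c d # gs))"
| "cnot_cost (CRy a b # gs) = 2 + cnot_cost gs"
| "cnot_cost (SWAP a b # gs) = 3 + cnot_cost gs"

end

theory Submission
  imports Defs
begin

(* Every step of the loop that moves the target one vertex forward emits an optional CRy
   followed by a SWAP on the same two qubits, which are fused into 3 CNOTs; a step that
   moves back onto the previous vertex emits only the optional CRy and advances by two,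
   and the final step emits at most one CRy. Hence one application along a walk of
   length k costs at most 3(k - 3) + 2 CNOTs after its first CRy, and merging that CRy
   in every application but the first gives 2 + l (3(k - 3) + 2) <= (3k - 4) l + 2 for k >= 2. *)

declare app_loop.simps[simp del]

lemma cnot_cost_CRy_Cons_le: "cnot_cost (CRy a b # gs) \<le> 2 + cnot_cost gs"
  by (cases gs rule: cnot_cost.cases) auto

lemma cnot_cost_append_le: "cnot_cost (gs @ hs) \<le> cnot_cost gs + cnot_cost hs"
proof (induction gs rule: cnot_cost.induct)
  case (2 a b c d gs)
  then show ?case using cnot_cost_CRy_Cons_le[of a b "SWAP c d # gs @ hs"] by auto
next
  case ("3_1" a b)
  then show ?case using cnot_cost_CRy_Cons_le[of a b hs] by simp
next
  case ("3_2" a b c d gs)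
  then show ?case using cnot_cost_CRy_Cons_le[of a b "(CRy c d # gs) @ hs"] by simp
qed auto

lemma cnot_cost_app_loop_le: "cnot_cost (app_loop xs U j) \<le> 3 * (length xs - 1 - j) + 2"
proof (induction xs U j rule: app_loop.induct)
  case (1 xs U j)
  define cry where "cry = (if xs ! j \<notin> U then [CRy (xs ! j) (xs ! (j - 1))] else [])"
  define swap where "swap = SWAP (xs ! (j - 1)) (xs ! j)"
  define U' where "U' = insert (xs ! j) U"
  have cry: "cnot_cost cry \<le> 2" and cry_swap: "cnot_cost (cry @ [swap]) \<le> 3"
    unfolding cry_def swap_def by auto
  consider (stop) "length xs < j + 1 \<or> j < 1"
    | (final) "\<not> (length xs < j + 1 \<or> j < 1)" "j = length xs - 1"
    | (retreat) "\<not> (length xs < j + 1 \<or> j < 1)" "j \<noteq> length xs - 1" "xs ! (j + 1) = xs ! (j - 1)"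
    | (advance) "\<not> (length xs < j + 1 \<or> j < 1)" "j \<noteq> length xs - 1" "xs ! (j + 1) \<noteq> xs ! (j - 1)"
    by blast
  then show ?case
  proof cases
    case stop
    then show ?thesis by (simp add: app_loop.simps)
  next
    case final
    then show ?thesis using cry by (simp add: app_loop.simps cry_def[symmetric])
  next
    case retreat
    then have "cnot_cost (app_loop xs U j) = cnot_cost (cry @ app_loop xs U' (j + 2))"
      by (simp add: app_loop.simps cry_def[symmetric] U'_def Let_def)
    also have "\<dots> \<le> 2 + (3 * (length xs - 1 - (j + 2)) + 2)"
      using cnot_cost_append_le[of cry "app_loop xs U' (j + 2)"] cry 1(1)[OF retreat(1) U'_def retreat(2-3)]
      by linarith
    also have "\<dots> \<le> 3 * (length xs - 1 - j) + 2"
      using retreat by linarith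
    finally show ?thesis .
  next
    case advance
    then have "cnot_cost (app_loop xs U j) = cnot_cost ((cry @ [swap]) @ app_loop xs U' (j + 1))"
      by (simp add: app_loop.simps cry_def[symmetric] swap_def U'_def Let_def)
    also have "\<dots> \<le> 3 + (3 * (length xs - 1 - (j + 1)) + 2)"
      using cnot_cost_append_le[of "cry @ [swap]" "app_loop xs U' (j + 1)"] cry_swap
        1(2)[OF advance(1) U'_def advance(2-3)]
      by linarith
    also have "\<dots> \<le> 3 * (length xs - 1 - j) + 2"
      using advance by linarith
    finally show ?thesis .
  qed
qed

lemma cnot_cost_tl_single_application_le:
  "cnot_cost (tl (single_application xs)) \<le> 3 * (length xs - 3) + 2"
  using cnot_cost_app_loop_le[of xs "{xs ! 0}" 2] by (simp add: single_application_def)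

lemma cnot_cost_single_application_le:
  "cnot_cost (single_application xs) \<le> 3 * (length xs - 3) + 4"
  using cnot_cost_CRy_Cons_le[of "xs ! 0" "xs ! 1" "app_loop xs {xs ! 0} 2"]
    cnot_cost_tl_single_application_le[of xs]
  by (simp add: single_application_def)

lemma cnot_cost_path_strategy_apps_le:
  "n \<ge> 1 \<Longrightarrow> cnot_cost (path_strategy_apps P n) \<le> n * (3 * (length P - 3) + 2) + 2"
proof (induction P n rule: path_strategy_apps.induct)
  case (2 P)
  then show ?case using cnot_cost_single_application_le[of P] by simp
next
  case (3 P n)
  let ?next = "tl (single_application (if even (Suc n) then P else rev P))"
  have "cnot_cost ?next \<le> 3 * (length P - 3) + 2"
    using cnot_cost_tl_single_application_le[of P] cnot_cost_tl_single_application_le[of "rev P"]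
    by simp
  then show ?case
    using 3 cnot_cost_append_le[of "path_strategy_apps P (Suc n)" ?next] by simp
qed simp

lemma length_shortest_covering_walk_ge:
  assumes "shortest_covering_walk V E P"
  shows "card V \<le> length P"
  using assms card_length[of P] by (simp add: shortest_covering_walk_def)

(* The graph hypotheses only serve to give length P \<ge> 2 (via card V \<ge> 2 and set P = V);
   the cost bound holds for every list of that length. *)
theorem theorem4:
  fixes V :: "'a set" and E :: "'a \<Rightarrow> 'a \<Rightarrow> bool" and P :: "'a list" and l :: nat
  assumes "simple_graph V E"
    and "connected_graph V E"
    and "card V \<ge> 2"
    and "shortest_covering_walk V E P"
    and "l \<ge> 1"
  shows "int (cnot_cost (path_strategy_apps P l)) \<le> (3 * int (length P) - 4) * int l + 2"
proof -
  have "length P \<ge> 2"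
    using assms(3) length_shortest_covering_walk_ge[OF assms(4)] by simp
  then have "int (3 * (length P - 3) + 2) \<le> 3 * int (length P) - 4"
    by linarith
  then have "int (l * (3 * (length P - 3) + 2)) \<le> (3 * int (length P) - 4) * int l"
    unfolding of_nat_mult by (metis mult.commute mult_right_mono of_nat_0_le_iff)
  then show ?thesis
    using cnot_cost_path_strategy_apps_le[OF assms(5), of P] by linarith
qed

end
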